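(* Let $S_1, S_2$ be triangle meshes with $n_1$ and $n_2$ vertices, and for $i=1,2$ let $\Phi_i \in \mathbb{R}^{n_i \times k}$ be the matrix of the first $k$ eigenfunctions of the cotangent Laplace–Beltrami operator of $S_i$, normalized so that $\Phi_i^T A_i \Phi_i = \mathbb{I}$, where $A_i$ is the area (mass) matrix of $S_i$. Put $\Phi_i^{\dagger} = \Phi_i^T A_i$. Let $F_1 \in \mathbb{R}^{n_1\times p}$ and $F_2 \in \mathbb{R}^{n_2 \times p}$ be feature matrices produced by a feature extractor that is complete, i.e. $F_i = \Phi_i \Phi_i^{\dagger} F_i$ for $i=1,2$. Let $\mathbf{A}_1 = \Phi_1^{\dagger} F_1$, $\mathbf{A}_2 = \Phi_2^{\dagger} F_2$, and $\mathbf{C}_{\rm opt} = \arg\min_{\mathbf{C}\in\mathbb{R}^{k\times k}} \|\mathbf{C}\mathbf{A}_1 - \mathbf{A}_2\|_F$. Assume that all optimization problems below have unique global minimizers (in particular $\mathbf{A}_1$ has full rank, and in problems of the form $\arg\min_{\Pi}\|\Pi G_1 - G_2\|$ the rows of $G_1$ are pairwise distinct). Then: (1) If $\Pi F_1 = F_2$ for some point-to-point map matrix $\Pi \in \{0,1\}^{n_2\times n_1}$, then $\mathbf{C}_{12} = \Phi_2^{\dagger}\Pi\Phi_1$ is basis-aligning; moreover $\mathbf{C}_{12} = \mathbf{C}_{\rm opt}$, and the point-to-point map obtained from $\mathbf{C}_{\rm opt}$ by the adjoint method, $\arg\min_{\Pi'} \|\Pi'\Phi_1 - \Phi_2 \mathbf{C}_{\rm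 opt}\|$, coincides with the one obtained by nearest-neighbour search in feature space, $\arg\min_{\Pi'}\|\Pi' F_1 - F_2\|$. (2) Conversely, if $F_1, F_2$ are complete and $\mathbf{C}_{\rm opt}$ is basis-aligning, then $\arg\min_{\Pi}\|\Pi F_1 - F_2\| = \arg\min_{\Pi}\|\Pi\Phi_1 - \Phi_2 \mathbf{C}_{\rm opt}\|$. Here all minimizations over $\Pi$ range over point-to-point map matrices $\Pi\in\{0,1\}^{n_2\times n_1}$.
   Context: A point-to-point map from the vertices of $S_2$ to the vertices of $S_1$ is encoded as a matrix $\Pi \in \{0,1\}^{n_2 \times n_1}$ with exactly one entry equal to $1$ in each row ($\Pi(i,j)=1$ iff vertex $i$ of $S_2$ is mapped to vertex $j$ of $S_1$). Norms $\|\cdot\|$ are Frobenius norms. A functional map $\mathbf{C}_{12}\in\mathbb{R}^{k\times k}$ is called basis-aligning if there exists a point-to-point map matrix $\Pi_{21}\in\{0,1\}^{n_2\times n_1}$ such that $\Phi_2 \mathbf{C}_{12} = \Pi_{21}\Phi_1$. The "adjoint method" converts a functional map $\mathbf{C}_{12}$ into a point-to-point map by solving $\arg\min_{\Pi}\|\Pi\Phi_1 - \Phi_2\mathbf{C}_{12}\|$, i.e. nearest-neighbour search between rows of $\Phi_1$ and rows of $\Phi_2\mathbf{C}_{12}$. *)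

theory Defs
  imports "HOL-Analysis.Analysis"
begin

text \<open>Matrices are HOL-Analysis matrices: an m x n real matrix is of type
  real^'n^'m (rows indexed by 'm). The norm on real^'n^'m is the Euclidean norm
  of the vector of row norms, i.e. exactly the Frobenius norm.\<close>

definition p2p_map :: "real^'a^'b \<Rightarrow> bool" where
  "p2p_map P \<longleftrightarrow> (\<forall>i j. P$i$j = 0 \<or> P$i$j = 1) \<and> (\<forall>i. \<exists>!j. P$i$j = 1)"

definition basis_aligning ::
  "real^'k^'a \<Rightarrow> real^'k^'b \<Rightarrow> real^'k^'k \<Rightarrow> bool" where
  "basis_aligning Phi1 Phi2 C \<longleftrightarrow> (\<exists>P::real^'a^'b. p2p_map P \<and> Phi2 ** C = P ** Phi1)"

definition pinv_A :: "real^'k^'n \<Rightarrow> real^'n^'n \<Rightarrow> real^'n^'k" where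
  "pinv_A Phi A = transpose Phi ** A"

definition complete_feat :: "real^'k^'n \<Rightarrow> real^'n^'n \<Rightarrow> real^'p^'n \<Rightarrow> bool" where
  "complete_feat Phi A F \<longleftrightarrow> F = Phi ** (pinv_A Phi A ** F)"

definition spd :: "real^'n^'n \<Rightarrow> bool" where
  "spd A \<longleftrightarrow> transpose A = A \<and> (\<forall>x. x \<noteq> 0 \<longrightarrow> x \<bullet> (A *v x) > 0)"

definition eigenbasis ::
  "real^'n^'n \<Rightarrow> real^'n^'n \<Rightarrow> real^'k \<Rightarrow> real^'k^'n \<Rightarrow> bool" where
  "eigenbasis L A lam Phi \<longleftrightarrow> transpose L = L \<and> spd A \<and>
     L ** Phi = A ** Phi ** (\<chi> i j. if i = j then lam$i else 0) \<and>
     transpose Phi ** A ** Phi = mat 1"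

end

theory Submission
  imports Defs
begin

text \<open>Completeness gives \<open>F1 = Phi1 B\<close> and \<open>F2 = Phi2 Y\<close> with \<open>B = Phi1\<^sup>\<dagger> F1\<close>
  and \<open>Y = Phi2\<^sup>\<dagger> F2\<close>, and uniqueness of the least-squares solution \<open>Copt\<close> of
  \<open>C B \<approx> Y\<close> means that \<open>M B = 0\<close> forces \<open>M = 0\<close>.
  For (2), if \<open>Phi2 Copt = Q Phi1\<close> then
  \<open>P F1 - F2 = (P Phi1 - Phi2 Copt) B + Phi2 E\<close> with \<open>E = Copt B - Y\<close>; the normal
  equation \<open>E B\<^sup>T = 0\<close> makes the two summands orthogonal, and \<open>Q\<close> annihilates the
  first one, so \<open>Q\<close> minimises the feature residual as well as the adjoint one.
  For (1), \<open>(Pi Phi1 - Phi2 C12) B = F2 - Phi2 Phi2\<^sup>\<dagger> F2 = 0\<close>, so \<open>Phi2 C12 = Pi Phi1\<close>;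
  moreover \<open>C12 B = Y\<close>, so \<open>C12\<close> solves the least-squares problem exactly, hence
  \<open>C12 = Copt\<close> is basis-aligning and (2) applies.\<close>

lemma matrix_add_rdistrib: "((A::real^'n^'m) + B) ** (C::real^'p^'n) = A ** C + B ** C"
  by (vector matrix_matrix_mult_def sum.distrib[symmetric] field_simps)

lemma matrix_diff_rdistrib: "((A::real^'n^'m) - B) ** (C::real^'p^'n) = A ** C - B ** C"
  by (vector matrix_matrix_mult_def sum_subtractf[symmetric] field_simps)

lemma matrix_diff_ldistrib: "(A::real^'n^'m) ** ((B::real^'p^'n) - C) = A ** B - A ** C"
  by (vector matrix_matrix_mult_def sum_subtractf[symmetric] field_simps)

lemma inner_matrix_mult_left:
  "((X::real^'n^'m) ** (Y::real^'p^'n)) \<bullet> Z = X \<bullet> (Z ** transpose Y)"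
proof -
  have "(X ** Y) \<bullet> Z = (\<Sum>i\<in>UNIV. \<Sum>k\<in>UNIV. \<Sum>j\<in>UNIV. X$i$j * Y$j$k * Z$i$k)"
    by (simp add: inner_vec_def matrix_matrix_mult_def sum_distrib_right)
  also have "\<dots> = (\<Sum>i\<in>UNIV. \<Sum>j\<in>UNIV. \<Sum>k\<in>UNIV. X$i$j * Y$j$k * Z$i$k)"
    by (rule sum.cong[OF refl], rule sum.swap)
  also have "\<dots> = X \<bullet> (Z ** transpose Y)"
    by (simp add: inner_vec_def matrix_matrix_mult_def transpose_def sum_distrib_left mult_ac)
  finally show ?thesis .
qed

lemma orthogonal_if_norm_minimal_on_line:
  fixes e v :: "'a::real_inner"
  assumes min: "\<And>t. norm e \<le> norm (e - t *\<^sub>R v)"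
  shows "orthogonal e v"
proof (cases "v = 0")
  case False
  define t where "t = (e \<bullet> v) / (v \<bullet> v)"
  have vv: "v \<bullet> v > 0" using False by simp
  have "norm (e - t *\<^sub>R v) ^ 2 = e \<bullet> e - 2 * t * (e \<bullet> v) + t^2 * (v \<bullet> v)"
    unfolding power2_norm_eq_inner
    by (simp add: inner_diff_left inner_diff_right inner_commute[of v e] power2_eq_square
        algebra_simps)
  also have "\<dots> = norm e ^ 2 - (e \<bullet> v)^2 / (v \<bullet> v)"
    using vv by (simp add: t_def dot_square_norm field_simps power2_eq_square)
  finally have "norm (e - t *\<^sub>R v) ^ 2 = norm e ^ 2 - (e \<bullet> v)^2 / (v \<bullet> v)" .
  moreover have "norm e ^ 2 \<le> norm (e - t *\<^sub>R v) ^ 2"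
    using min[of t] by (simp add: power_mono)
  ultimately have "(e \<bullet> v)^2 / (v \<bullet> v) \<le> 0" by simp
  then have "(e \<bullet> v)^2 \<le> 0" using vv by (simp add: divide_le_0_iff)
  then show ?thesis by (simp add: orthogonal_def)
qed (simp add: orthogonal_def)

lemma least_squares_normal_equation:
  fixes B :: "real^'p^'k" and Y :: "real^'p^'m" and C :: "real^'k^'m"
  assumes min: "\<And>C'. norm (C ** B - Y) \<le> norm (C' ** B - Y)"
  shows "(C ** B - Y) ** transpose B = 0"
proof -
  define G where "G = (C ** B - Y) ** transpose B"
  have "norm (C ** B - Y) \<le> norm ((C ** B - Y) - t *\<^sub>R (G ** B))" for t
    using min[of "C - t *\<^sub>R G"]
    by (simp add: matrix_diff_rdistrib scalar_matrix_assoc[symmetric] algebra_simps)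
  then have "(C ** B - Y) \<bullet> (G ** B) = 0"
    using orthogonal_if_norm_minimal_on_line orthogonal_def by blast
  moreover have "(C ** B - Y) \<bullet> (G ** B) = G \<bullet> G"
    by (simp add: inner_commute[of _ "G ** B"] inner_matrix_mult_left G_def)
  ultimately show ?thesis by (simp add: G_def)
qed

text \<open>Any shape of \<open>M\<close> is allowed: if \<open>M B = 0\<close>, the matrix \<open>D\<close> all of whose rows equal
  row \<open>i\<close> of \<open>M\<close> satisfies \<open>D B = 0\<close>, so \<open>C + D\<close> is another minimiser.\<close>
lemma unique_least_squares_cancel:
  fixes B :: "real^'p^'k" and Y :: "real^'p^'m" and C :: "real^'k^'m"
    and M :: "real^'k^'n"
  assumes C_min: "is_arg_min (\<lambda>C. norm (C ** B - Y)) (\<lambda>_. True) C"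
    and C_uniq: "\<And>C'. is_arg_min (\<lambda>C. norm (C ** B - Y)) (\<lambda>_. True) C' \<Longrightarrow> C' = C"
    and MB: "M ** B = 0"
  shows "M = 0"
proof -
  have "M $ i = 0" for i
  proof -
    define D :: "real^'k^'m" where "D = (\<chi> r. M $ i)"
    have "D ** B = (\<chi> r. (M ** B) $ i)"
      by (simp add: D_def matrix_matrix_mult_def)
    then have "(C + D) ** B = C ** B"
      using MB by (simp add: matrix_add_rdistrib vec_eq_iff)
    then have "C + D = C"
      using C_min by (intro C_uniq) (simp add: is_arg_min_def)
    then show ?thesis by (simp add: D_def vec_eq_iff)
  qed
  then show ?thesis by (simp add: vec_eq_iff)
qed

lemma is_arg_min_iff_eq_unique:
  fixes f :: "'a \<Rightarrow> 'b::linorder"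
  assumes "P x" "\<And>y. P y \<Longrightarrow> f x \<le> f y" "\<exists>!x. is_arg_min f P x"
  shows "is_arg_min f P y \<longleftrightarrow> y = x"
proof -
  have "is_arg_min f P x" using assms(1,2) by (auto simp: is_arg_min_def not_less)
  then show ?thesis using assms(3) by blast
qed

lemma exact_feature_map_aligns_bases:
  fixes Phi1 :: "real^'k^'a" and Phi2 :: "real^'k^'b" and Pi :: "real^'a^'b"
    and B :: "real^'p^'k"
  assumes compl2: "complete_feat Phi2 A2 F2"
    and F1: "F1 = Phi1 ** B" and PiF: "Pi ** F1 = F2"
    and cancel: "\<And>M::real^'k^'b. M ** B = 0 \<Longrightarrow> M = 0"
  shows "Phi2 ** (pinv_A Phi2 A2 ** Pi ** Phi1) = Pi ** Phi1"
proof -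
  have "(Pi ** Phi1 - Phi2 ** (pinv_A Phi2 A2 ** Pi ** Phi1)) ** B
          = Pi ** F1 - Phi2 ** (pinv_A Phi2 A2 ** (Pi ** F1))"
    by (simp add: matrix_diff_rdistrib F1 matrix_mul_assoc)
  also have "\<dots> = 0" using PiF compl2 by (simp add: complete_feat_def)
  finally show ?thesis using cancel by fastforce
qed

lemma aligned_map_minimizes_feature_residual:
  fixes Phi1 :: "real^'k^'a" and Phi2 :: "real^'k^'b" and P Q :: "real^'a^'b"
    and B :: "real^'p^'k" and Y :: "real^'p^'k"
  assumes F1: "F1 = Phi1 ** B" and F2: "F2 = Phi2 ** Y"
    and normal: "(C ** B - Y) ** transpose B = 0"
    and aligned: "Phi2 ** C = Q ** Phi1"
  shows "norm (Q ** F1 - F2) \<le> norm (P ** F1 - F2)"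
proof -
  define E where "E = C ** B - Y"
  have QF: "Q ** F1 - F2 = Phi2 ** E"
    by (simp add: E_def F1 F2 matrix_diff_ldistrib matrix_mul_assoc aligned)
  have PF: "P ** F1 - F2 = (P ** Phi1 - Phi2 ** C) ** B + Phi2 ** E"
    by (simp add: E_def F1 F2 matrix_diff_ldistrib matrix_diff_rdistrib matrix_mul_assoc)
  have "orthogonal ((P ** Phi1 - Phi2 ** C) ** B) (Phi2 ** E)"
    using normal
    by (simp add: orthogonal_def inner_matrix_mult_left E_def matrix_mul_assoc[symmetric])
  then have "norm (P ** F1 - F2) ^ 2 =
      norm ((P ** Phi1 - Phi2 ** C) ** B) ^ 2 + norm (Q ** F1 - F2) ^ 2"
    unfolding PF QF by (rule norm_add_Pythagorean)
  then show ?thesis by (simp add: power2_le_imp_le)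
qed

lemma basis_aligning_least_squares_same_p2p_map:
  fixes Phi1 :: "real^'k^'a" and Phi2 :: "real^'k^'b" and P :: "real^'a^'b"
    and B :: "real^'p^'k" and Y :: "real^'p^'k" and C :: "real^'k^'k"
  assumes F1: "F1 = Phi1 ** B" and F2: "F2 = Phi2 ** Y"
    and C_min: "is_arg_min (\<lambda>C. norm (C ** B - Y)) (\<lambda>_. True) C"
    and C_aligning: "basis_aligning Phi1 Phi2 C"
    and feat_uniq: "\<exists>!P::real^'a^'b. is_arg_min (\<lambda>P. norm (P ** F1 - F2)) p2p_map P"
    and adj_uniq: "\<exists>!P::real^'a^'b. is_arg_min (\<lambda>P. norm (P ** Phi1 - Phi2 ** C)) p2p_map P"
  shows "is_arg_min (\<lambda>P. norm (P ** F1 - F2)) p2p_map P \<longleftrightarrow>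
         is_arg_min (\<lambda>P. norm (P ** Phi1 - Phi2 ** C)) p2p_map P"
proof -
  obtain Q :: "real^'a^'b" where Q: "p2p_map Q" and aligned: "Phi2 ** C = Q ** Phi1"
    using C_aligning unfolding basis_aligning_def by blast
  have "(C ** B - Y) ** transpose B = 0"
    using C_min by (intro least_squares_normal_equation) (auto simp: is_arg_min_def not_less)
  then have "norm (Q ** F1 - F2) \<le> norm (P' ** F1 - F2)" for P' :: "real^'a^'b"
    by (rule aligned_map_minimizes_feature_residual[OF F1 F2 _ aligned])
  then show ?thesis
    using aligned is_arg_min_iff_eq_unique[OF Q _ adj_uniq]
      is_arg_min_iff_eq_unique[OF Q _ feat_uniq]
    by simp
qed

theorem theorem1:
  fixes L1 A1 :: "real^'a::finite^'a" and L2 A2 :: "real^'b::finite^'b"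
    and lam1 lam2 :: "real^'k::finite"
    and Phi1 :: "real^'k^'a" and Phi2 :: "real^'k^'b"
    and F1 :: "real^'p::finite^'a" and F2 :: "real^'p^'b"
    and Copt :: "real^'k^'k"
  assumes eig1: "eigenbasis L1 A1 lam1 Phi1"
    and eig2: "eigenbasis L2 A2 lam2 Phi2"
    and compl1: "complete_feat Phi1 A1 F1"
    and compl2: "complete_feat Phi2 A2 F2"
    and Copt_min: "is_arg_min (\<lambda>C. norm (C ** (pinv_A Phi1 A1 ** F1) - pinv_A Phi2 A2 ** F2))
                     (\<lambda>_. True) Copt"
    and Copt_uniq: "\<And>C. is_arg_min (\<lambda>C. norm (C ** (pinv_A Phi1 A1 ** F1) - pinv_A Phi2 A2 ** F2))
                     (\<lambda>_. True) C \<Longrightarrow> C = Copt"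
    and feat_uniq: "\<exists>!P::real^'a^'b. is_arg_min (\<lambda>P. norm (P ** F1 - F2)) p2p_map P"
    and adj_uniq: "\<exists>!P::real^'a^'b. is_arg_min (\<lambda>P. norm (P ** Phi1 - Phi2 ** Copt)) p2p_map P"
  shows
   "(\<forall>Pi::real^'a^'b. p2p_map Pi \<and> Pi ** F1 = F2 \<longrightarrow>
        basis_aligning Phi1 Phi2 (pinv_A Phi2 A2 ** Pi ** Phi1) \<and>
        pinv_A Phi2 A2 ** Pi ** Phi1 = Copt \<and>
        (\<forall>P::real^'a^'b. is_arg_min (\<lambda>P. norm (P ** Phi1 - Phi2 ** Copt)) p2p_map P \<longleftrightarrow>
                          is_arg_min (\<lambda>P. norm (P ** F1 - F2)) p2p_map P))
    \<and> (basis_aligning Phi1 Phi2 Copt \<longrightarrow>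
        (\<forall>P::real^'a^'b. is_arg_min (\<lambda>P. norm (P ** F1 - F2)) p2p_map P \<longleftrightarrow>
                          is_arg_min (\<lambda>P. norm (P ** Phi1 - Phi2 ** Copt)) p2p_map P))"
proof -
  define B where "B = pinv_A Phi1 A1 ** F1"
  define Y where "Y = pinv_A Phi2 A2 ** F2"
  have F1: "F1 = Phi1 ** B" and F2: "F2 = Phi2 ** Y"
    using compl1 compl2 by (simp_all add: complete_feat_def B_def Y_def)
  note Copt_min' = Copt_min[folded B_def Y_def] and Copt_uniq' = Copt_uniq[folded B_def Y_def]
  note same_p2p_map =
    basis_aligning_least_squares_same_p2p_map[OF F1 F2 Copt_min' _ feat_uniq adj_uniq]
  have "basis_aligning Phi1 Phi2 (pinv_A Phi2 A2 ** Pi ** Phi1) \<and>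
        pinv_A Phi2 A2 ** Pi ** Phi1 = Copt"
    if Pi: "p2p_map Pi" and PiF: "Pi ** F1 = F2" for Pi :: "real^'a^'b"
  proof -
    have aligned: "Phi2 ** (pinv_A Phi2 A2 ** Pi ** Phi1) = Pi ** Phi1"
      using exact_feature_map_aligns_bases[OF compl2 F1 PiF
          unique_least_squares_cancel[OF Copt_min' Copt_uniq']] .
    have "(pinv_A Phi2 A2 ** Pi ** Phi1) ** B = pinv_A Phi2 A2 ** (Pi ** F1)"
      by (simp add: F1 matrix_mul_assoc)
    then have "pinv_A Phi2 A2 ** Pi ** Phi1 = Copt"
      using PiF by (intro Copt_uniq') (simp add: is_arg_min_def Y_def)
    with aligned show ?thesis using Pi by (auto simp: basis_aligning_def)
  qed
  then show ?thesis using same_p2p_map by blast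
qed

end
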